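(* Let $\sigma_0,\sigma_\epsilon>0$ with $\sigma_0\neq\sigma_\epsilon$, and $\theta_0\in\mathbb{R}$. Let the prior be $\Theta\sim\mathrm{Laplace}(\theta_0,\sigma_0)$ and the signal $X=\Theta+\epsilon$ with $\epsilon\sim\mathrm{Laplace}(0,\sigma_\epsilon)$ independent of $\Theta$. Put $x_0=x-\theta_0$, $a_0=1/\sigma_0$, $a_\epsilon=1/\sigma_\epsilon$, $x^*=\frac{2a_0}{a_\epsilon^2-a_0^2}$. Then the posterior mean $\theta_1=\mathbb{E}[\Theta\mid X=x]$ is $$\theta_1=\theta_0+\operatorname{sgn}(x_0)\,\frac{a_\epsilon}{a_\epsilon e^{(a_\epsilon-a_0)|x_0|}-a_0}\Bigl((|x_0|-x^* )e^{(a_\epsilon-a_0)|x_0|}+x^*\Bigr).$$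
   Context: $\mathrm{Laplace}(\mu,s)$ has density $t\mapsto\frac{1}{2s}e^{-|t-\mu|/s}$. The posterior mean is $\theta_1=\frac{\int\theta f_\Theta(\theta)l_\epsilon(x-\theta)d\theta}{\int f_\Theta(\theta)l_\epsilon(x-\theta)d\theta}$ with $f_\Theta,l_\epsilon$ the prior and noise densities. *)

theory Defs
  imports "HOL-Analysis.Analysis"
begin

definition laplace_density :: "real \<Rightarrow> real \<Rightarrow> real \<Rightarrow> real" where
  "laplace_density mu s t = exp (- \<bar>t - mu\<bar> / s) / (2 * s)"

definition posterior_mean :: "(real \<Rightarrow> real) \<Rightarrow> (real \<Rightarrow> real) \<Rightarrow> real \<Rightarrow> real" where
  "posterior_mean f l x =
     (\<integral>\<theta>. \<theta> * f \<theta> * l (x - \<theta>) \<partial>lborel) / (\<integral>\<theta>. f \<theta> * l (x - \<theta>) \<partial>lborel)"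

end

theory Submission
  imports Defs "HOL-Real_Asymp.Real_Asymp"
begin

text \<open>Write \<open>a = 1/\<sigma>\<^sub>0\<close>, \<open>b = 1/\<sigma>\<^sub>\<epsilon>\<close>, \<open>y = \<bar>x - \<theta>\<^sub>0\<bar>\<close> and substitute
  \<open>\<theta> = \<theta>\<^sub>0 + s u\<close> with \<open>s = \<plusminus>1\<close> the sign of \<open>x - \<theta>\<^sub>0\<close>. Prior times likelihood then becomes a
  constant multiple of \<open>exp (- a \<bar>u\<bar> - b \<bar>y - u\<bar>)\<close>, which is a single exponential on each of
  \<open>(-\<infinity>, 0)\<close>, \<open>(0, y)\<close> and \<open>(y, \<infinity>)\<close>. So the normalising constant and the first moment are
  elementary integrals, each carrying the factor \<open>exp (- b y)\<close>; the posterior mean is \<open>\<theta>\<^sub>0 + s\<close>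
  times their ratio, and \<open>\<sigma>\<^sub>0 \<noteq> \<sigma>\<^sub>\<epsilon>\<close> keeps the exponent \<open>b - a\<close> of the middle piece nonzero.\<close>

lemma interval_integral_exp_Ioi:
  fixes c y :: real
  assumes "c > 0"
  shows "set_integrable lborel (einterval y \<infinity>) (\<lambda>u. exp (- c * (u - y)))"
    and "(LBINT u=ereal y..\<infinity>. exp (- c * (u - y))) = 1 / c"
proof -
  let ?F = "\<lambda>u. - exp (- c * (u - y)) / c"
  have D: "DERIV ?F u :> exp (- c * (u - y))" for u
    using assms by (auto intro!: derivative_eq_intros simp: field_simps)
  have A: "((?F \<circ> real_of_ereal) \<longlongrightarrow> - 1 / c) (at_right (ereal y))"
    unfolding ereal_tendsto_simps using assms by (auto intro!: tendsto_eq_intros)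
  have B: "((?F \<circ> real_of_ereal) \<longlongrightarrow> 0) (at_left \<infinity>)"
    unfolding ereal_tendsto_simps using assms by real_asymp
  show "set_integrable lborel (einterval y \<infinity>) (\<lambda>u. exp (- c * (u - y)))"
    by (rule interval_integral_FTC_nonneg(1)[OF _ D _ _ A B]) auto
  show "(LBINT u=ereal y..\<infinity>. exp (- c * (u - y))) = 1 / c"
    by (subst interval_integral_FTC_nonneg(2)[OF _ D _ _ A B]) auto
qed

lemma interval_integral_mult_exp_Ioi:
  fixes c y :: real
  assumes "c > 0" and "y \<ge> 0"
  shows "set_integrable lborel (einterval y \<infinity>) (\<lambda>u. u * exp (- c * (u - y)))"
    and "(LBINT u=ereal y..\<infinity>. u * exp (- c * (u - y))) = y / c + 1 / c\<^sup>2"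
proof -
  let ?F = "\<lambda>u. - (u / c + 1 / c\<^sup>2) * exp (- c * (u - y))"
  have D: "DERIV ?F u :> u * exp (- c * (u - y))" for u
    using assms by (auto intro!: derivative_eq_intros simp: field_simps power2_eq_square)
  have A: "((?F \<circ> real_of_ereal) \<longlongrightarrow> - (y / c + 1 / c\<^sup>2)) (at_right (ereal y))"
    unfolding ereal_tendsto_simps using assms by (auto intro!: tendsto_eq_intros)
  have B: "((?F \<circ> real_of_ereal) \<longlongrightarrow> 0) (at_left \<infinity>)"
    unfolding ereal_tendsto_simps using assms by real_asymp
  have nonneg: "AE u in lborel. ereal y < ereal u \<longrightarrow> ereal u < \<infinity> \<longrightarrow> 0 \<le> u * exp (- c * (u - y))"
    using assms by auto
  show "set_integrable lborel (einterval y \<infinity>) (\<lambda>u. u * exp (- c * (u - y)))"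
    by (rule interval_integral_FTC_nonneg(1)[OF _ D _ nonneg A B]) auto
  show "(LBINT u=ereal y..\<infinity>. u * exp (- c * (u - y))) = y / c + 1 / c\<^sup>2"
    by (subst interval_integral_FTC_nonneg(2)[OF _ D _ nonneg A B]) auto
qed

lemma interval_integral_exp_Iio:
  fixes c :: real
  assumes "c > 0"
  shows "set_integrable lborel (einterval (-\<infinity>) 0) (\<lambda>u. exp (c * u))"
    and "(LBINT u=-\<infinity>..0. exp (c * u)) = 1 / c"
proof -
  let ?F = "\<lambda>u. exp (c * u) / c"
  have D: "DERIV ?F u :> exp (c * u)" for u
    using assms by (auto intro!: derivative_eq_intros)
  have A: "((?F \<circ> real_of_ereal) \<longlongrightarrow> 0) (at_right (-\<infinity>))"
    unfolding ereal_tendsto_simps using assms by real_asymp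
  have B: "((?F \<circ> real_of_ereal) \<longlongrightarrow> 1 / c) (at_left (ereal 0))"
    unfolding ereal_tendsto_simps using assms by (auto intro!: tendsto_eq_intros)
  show "set_integrable lborel (einterval (-\<infinity>) 0) (\<lambda>u. exp (c * u))"
    using interval_integral_FTC_nonneg(1)[OF _ D _ _ A B] by (auto simp: zero_ereal_def)
  show "(LBINT u=-\<infinity>..0. exp (c * u)) = 1 / c"
    using interval_integral_FTC_nonneg(2)[OF _ D _ _ A B] by (auto simp: zero_ereal_def)
qed

lemma interval_integral_mult_exp_Iio:
  fixes c :: real
  assumes "c > 0"
  shows "set_integrable lborel (einterval (-\<infinity>) 0) (\<lambda>u. - u * exp (c * u))"
    and "(LBINT u=-\<infinity>..0. - u * exp (c * u)) = 1 / c\<^sup>2"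
proof -
  let ?F = "\<lambda>u. (1 / c\<^sup>2 - u / c) * exp (c * u)"
  have D: "DERIV ?F u :> - u * exp (c * u)" for u
    using assms by (auto intro!: derivative_eq_intros simp: field_simps power2_eq_square)
  have A: "((?F \<circ> real_of_ereal) \<longlongrightarrow> 0) (at_right (-\<infinity>))"
    unfolding ereal_tendsto_simps using assms by real_asymp
  have B: "((?F \<circ> real_of_ereal) \<longlongrightarrow> 1 / c\<^sup>2) (at_left (ereal 0))"
    unfolding ereal_tendsto_simps using assms by (auto intro!: tendsto_eq_intros)
  have nonneg: "AE u in lborel. -\<infinity> < ereal u \<longrightarrow> ereal u < ereal 0 \<longrightarrow> 0 \<le> - u * exp (c * u)"
    by (auto simp: mult_nonpos_nonneg)
  show "set_integrable lborel (einterval (-\<infinity>) 0) (\<lambda>u. - u * exp (c * u))"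
    using interval_integral_FTC_nonneg(1)[OF _ D _ nonneg A B] by (auto simp: zero_ereal_def)
  show "(LBINT u=-\<infinity>..0. - u * exp (c * u)) = 1 / c\<^sup>2"
    using interval_integral_FTC_nonneg(2)[OF _ D _ nonneg A B] by (auto simp: zero_ereal_def)
qed

lemma interval_integral_exp_Ioo:
  fixes d y :: real
  assumes "d \<noteq> 0" and "y \<ge> 0"
  shows "set_integrable lborel (einterval 0 y) (\<lambda>u. exp (d * u))"
    and "(LBINT u=0..y. exp (d * u)) = (exp (d * y) - 1) / d"
proof -
  have "interval_lebesgue_integrable lborel 0 y (\<lambda>u. exp (d * u))"
    using assms unfolding zero_ereal_def by (intro interval_integrable_continuous_on) (auto intro!: continuous_intros)
  then show "set_integrable lborel (einterval 0 y) (\<lambda>u. exp (d * u))"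
    using assms by (simp add: interval_lebesgue_integrable_def zero_ereal_def)
  have "(LBINT u=ereal 0..y. exp (d * u)) = exp (d * y) / d - exp (d * 0) / d"
    by (rule interval_integral_FTC_finite)
      (use assms in \<open>auto intro!: continuous_intros derivative_eq_intros
        simp: has_real_derivative_iff_has_vector_derivative[symmetric]\<close>)
  then show "(LBINT u=0..y. exp (d * u)) = (exp (d * y) - 1) / d"
    by (simp add: diff_divide_distrib zero_ereal_def)
qed

lemma interval_integral_mult_exp_Ioo:
  fixes d y :: real
  assumes "d \<noteq> 0" and "y \<ge> 0"
  shows "set_integrable lborel (einterval 0 y) (\<lambda>u. u * exp (d * u))"
    and "(LBINT u=0..y. u * exp (d * u)) = (y / d - 1 / d\<^sup>2) * exp (d * y) + 1 / d\<^sup>2"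
proof -
  have "interval_lebesgue_integrable lborel 0 y (\<lambda>u. u * exp (d * u))"
    using assms unfolding zero_ereal_def by (intro interval_integrable_continuous_on) (auto intro!: continuous_intros)
  then show "set_integrable lborel (einterval 0 y) (\<lambda>u. u * exp (d * u))"
    using assms by (simp add: interval_lebesgue_integrable_def zero_ereal_def)
  have "(LBINT u=ereal 0..y. u * exp (d * u)) =
      (y / d - 1 / d\<^sup>2) * exp (d * y) - (0 / d - 1 / d\<^sup>2) * exp (d * 0)"
    by (rule interval_integral_FTC_finite)
      (use assms in \<open>auto intro!: continuous_intros derivative_eq_intros
        simp: has_real_derivative_iff_has_vector_derivative[symmetric] field_simps power2_eq_square\<close>)
  then show "(LBINT u=0..y. u * exp (d * u)) = (y / d - 1 / d\<^sup>2) * exp (d * y) + 1 / d\<^sup>2"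
    by (simp add: zero_ereal_def)
qed

lemma interval_integral_cong_scaled:
  fixes p q :: ereal and f h :: "real \<Rightarrow> real"
  assumes "p \<le> q" and eq: "\<And>u. p < ereal u \<Longrightarrow> ereal u < q \<Longrightarrow> f u = C * h u"
    and h: "set_integrable lborel (einterval p q) h" and I: "(LBINT u=p..q. h u) = I"
  shows "set_integrable lborel (einterval p q) f" and "(LBINT u=p..q. f u) = C * I"
proof -
  have "set_integrable lborel (einterval p q) (\<lambda>u. C * h u)"
    using h by (rule set_integrable_mult_right)
  then show "set_integrable lborel (einterval p q) f"
    by (subst set_integrable_cong[OF refl refl]) (auto simp: eq einterval_iff)
  have "(LBINT u=p..q. f u) = (LBINT u=p..q. C * h u)"
    by (rule interval_integral_cong) (use assms in \<open>auto simp: einterval_iff min_def max_def\<close>)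
  then show "(LBINT u=p..q. f u) = C * I"
    by (simp add: I)
qed

lemma lborel_integral_split3:
  fixes f :: "real \<Rightarrow> real" and p q :: real
  assumes "p \<le> q"
    and "set_integrable lborel (einterval (-\<infinity>) p) f"
    and "set_integrable lborel (einterval p q) f"
    and "set_integrable lborel (einterval q \<infinity>) f"
  shows "integrable lborel f"
    and "integral\<^sup>L lborel f = (LBINT u=-\<infinity>..p. f u) + (LBINT u=p..q. f u) + (LBINT u=q..\<infinity>. f u)"
proof -
  let ?B = "einterval (-\<infinity>) p \<union> einterval p q \<union> einterval q \<infinity>"
  have "set_integrable lborel ?B f"
    by (intro set_integrable_Un assms) auto
  moreover have "set_integrable lborel UNIV f = set_integrable lborel ?B f"
    by (rule set_integrable_discrete_difference[where X = "{p, q}"]) (auto simp: einterval_def)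
  ultimately have on_UNIV: "set_integrable lborel UNIV f" by simp
  then show "integrable lborel f" by (simp add: set_integrable_def)
  have whole: "interval_lebesgue_integrable lborel (-\<infinity>) \<infinity> f"
    using on_UNIV by (simp add: interval_lebesgue_integrable_def)
  have upper: "interval_lebesgue_integrable lborel p \<infinity> f"
    using on_UNIV by (auto simp: interval_lebesgue_integrable_def intro: set_integrable_subset)
  have "integral\<^sup>L lborel f = (LBINT u=-\<infinity>..\<infinity>. f u)"
    by (simp add: interval_lebesgue_integral_def set_lebesgue_integral_def)
  also have "\<dots> = (LBINT u=-\<infinity>..p. f u) + (LBINT u=p..\<infinity>. f u)"
    by (rule interval_integral_sum[symmetric]) (use whole in \<open>simp add: min_def max_def\<close>)
  also have "(LBINT u=p..\<infinity>. f u) = (LBINT u=p..q. f u) + (LBINT u=q..\<infinity>. f u)"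
    by (rule interval_integral_sum[symmetric]) (use upper assms(1) in \<open>simp add: min_def max_def\<close>)
  finally show "integral\<^sup>L lborel f = (LBINT u=-\<infinity>..p. f u) + (LBINT u=p..q. f u) + (LBINT u=q..\<infinity>. f u)"
    by simp
qed

definition posterior_kernel :: "real \<Rightarrow> real \<Rightarrow> real \<Rightarrow> real \<Rightarrow> real" where
  "posterior_kernel a b y u = exp (- a * \<bar>u\<bar> - b * \<bar>y - u\<bar>)"

lemma posterior_kernel_piecewise:
  fixes a b y u :: real
  assumes "y \<ge> 0"
  shows "u \<le> 0 \<Longrightarrow> posterior_kernel a b y u = exp (- b * y) * exp ((a + b) * u)"
    and "0 \<le> u \<Longrightarrow> u \<le> y \<Longrightarrow> posterior_kernel a b y u = exp (- b * y) * exp ((b - a) * u)"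
    and "y \<le> u \<Longrightarrow>
      posterior_kernel a b y u = exp (- b * y) * exp ((b - a) * y) * exp (- (a + b) * (u - y))"
  using assms by (simp_all add: posterior_kernel_def exp_add[symmetric] algebra_simps)

lemma posterior_kernel_integral:
  fixes a b y :: real
  assumes "a > 0" and "b > 0" and "a \<noteq> b" and y: "y \<ge> 0"
  shows "integrable lborel (posterior_kernel a b y)"
    and "integral\<^sup>L lborel (posterior_kernel a b y) = exp (- b * y) *
      (1 / (a + b) + (exp ((b - a) * y) - 1) / (b - a) + exp ((b - a) * y) / (a + b))"
proof -
  let ?g = "posterior_kernel a b y"
  have "a + b > 0" and "b - a \<noteq> 0" using assms by auto
  have left: "set_integrable lborel (einterval (-\<infinity>) 0) ?g"
    "(LBINT u=-\<infinity>..0. ?g u) = exp (- b * y) * (1 / (a + b))"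
    using interval_integral_cong_scaled[OF _ _ interval_integral_exp_Iio[OF \<open>a + b > 0\<close>],
      where f = ?g and C = "exp (- b * y)"]
    by (simp_all add: posterior_kernel_piecewise y)
  have middle: "set_integrable lborel (einterval 0 y) ?g"
    "(LBINT u=0..y. ?g u) = exp (- b * y) * ((exp ((b - a) * y) - 1) / (b - a))"
    using interval_integral_cong_scaled[OF _ _ interval_integral_exp_Ioo[OF \<open>b - a \<noteq> 0\<close> y],
      where f = ?g and C = "exp (- b * y)"]
    by (simp_all add: posterior_kernel_piecewise y)
  have right: "set_integrable lborel (einterval y \<infinity>) ?g"
    "(LBINT u=y..\<infinity>. ?g u) = exp (- b * y) * exp ((b - a) * y) * (1 / (a + b))"
    using interval_integral_cong_scaled[OF _ _ interval_integral_exp_Ioi[OF \<open>a + b > 0\<close>],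
      where f = ?g and C = "exp (- b * y) * exp ((b - a) * y)"]
    by (simp_all add: posterior_kernel_piecewise y)
  note split = lborel_integral_split3[of 0 y, unfolded zero_ereal_def[symmetric], OF y left(1) middle(1) right(1)]
  show "integrable lborel ?g" by (rule split(1))
  show "integral\<^sup>L lborel ?g = exp (- b * y) *
      (1 / (a + b) + (exp ((b - a) * y) - 1) / (b - a) + exp ((b - a) * y) / (a + b))"
    unfolding split(2) left(2) middle(2) right(2) by (simp add: algebra_simps)
qed

lemma posterior_kernel_first_moment:
  fixes a b y :: real
  assumes "a > 0" and "b > 0" and "a \<noteq> b" and y: "y \<ge> 0"
  shows "integrable lborel (\<lambda>u. u * posterior_kernel a b y u)"
    and "(\<integral>u. u * posterior_kernel a b y u \<partial>lborel) = exp (- b * y) *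
      (- 1 / (a + b)\<^sup>2 + (y / (b - a) - 1 / (b - a)\<^sup>2) * exp ((b - a) * y) + 1 / (b - a)\<^sup>2
        + exp ((b - a) * y) * (y / (a + b) + 1 / (a + b)\<^sup>2))"
proof -
  let ?f = "\<lambda>u. u * posterior_kernel a b y u"
  have "a + b > 0" and "b - a \<noteq> 0" using assms by auto
  have left: "set_integrable lborel (einterval (-\<infinity>) 0) ?f"
    "(LBINT u=-\<infinity>..0. ?f u) = - exp (- b * y) * (1 / (a + b)\<^sup>2)"
    using interval_integral_cong_scaled[OF _ _ interval_integral_mult_exp_Iio[OF \<open>a + b > 0\<close>],
      where f = ?f and C = "- exp (- b * y)"]
    by (simp_all add: posterior_kernel_piecewise y)
  have middle: "set_integrable lborel (einterval 0 y) ?f"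
    "(LBINT u=0..y. ?f u) = exp (- b * y) *
      ((y / (b - a) - 1 / (b - a)\<^sup>2) * exp ((b - a) * y) + 1 / (b - a)\<^sup>2)"
    using interval_integral_cong_scaled[OF _ _ interval_integral_mult_exp_Ioo[OF \<open>b - a \<noteq> 0\<close> y],
      where f = ?f and C = "exp (- b * y)"]
    by (simp_all add: posterior_kernel_piecewise y)
  have right: "set_integrable lborel (einterval y \<infinity>) ?f"
    "(LBINT u=y..\<infinity>. ?f u) = exp (- b * y) * exp ((b - a) * y) * (y / (a + b) + 1 / (a + b)\<^sup>2)"
    using interval_integral_cong_scaled[OF _ _ interval_integral_mult_exp_Ioi[OF \<open>a + b > 0\<close> y],
      where f = ?f and C = "exp (- b * y) * exp ((b - a) * y)"]
    by (simp_all add: posterior_kernel_piecewise y)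
  note split = lborel_integral_split3[of 0 y, unfolded zero_ereal_def[symmetric],
      OF y left(1) middle(1) right(1)]
  show "integrable lborel ?f" by (rule split(1))
  show "(\<integral>u. ?f u \<partial>lborel) = exp (- b * y) *
      (- 1 / (a + b)\<^sup>2 + (y / (b - a) - 1 / (b - a)\<^sup>2) * exp ((b - a) * y) + 1 / (b - a)\<^sup>2
        + exp ((b - a) * y) * (y / (a + b) + 1 / (a + b)\<^sup>2))"
    unfolding split(2) left(2) middle(2) right(2) by (simp add: algebra_simps)
qed

lemma exp_mult_minus_one_same_sign:
  fixes d y :: real
  assumes "y \<ge> 0"
  shows "0 \<le> (exp (d * y) - 1) * d"
proof (cases "d \<ge> 0")
  case True
  then show ?thesis using assms by simp
next
  case False
  then have "exp (d * y) \<le> 1" using assms by (simp add: mult_nonpos_nonneg)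
  then show ?thesis using False by (simp add: mult_nonpos_nonpos)
qed

lemma posterior_kernel_integral_pos:
  fixes a b y :: real
  assumes "a > 0" and "b > 0" and "a \<noteq> b" and "y \<ge> 0"
  shows "integral\<^sup>L lborel (posterior_kernel a b y) > 0"
proof -
  have "(exp ((b - a) * y) - 1) / (b - a) = (exp ((b - a) * y) - 1) * (b - a) / (b - a)\<^sup>2"
    using assms by (simp add: power2_eq_square)
  also have "\<dots> \<ge> 0"
    using exp_mult_minus_one_same_sign[OF \<open>y \<ge> 0\<close>] by simp
  finally have "1 / (a + b) + (exp ((b - a) * y) - 1) / (b - a) + exp ((b - a) * y) / (a + b) > 0"
    using assms by (simp add: add_pos_nonneg)
  then show ?thesis
    unfolding posterior_kernel_integral(2)[OF assms] by simp
qed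

lemma posterior_kernel_mean:
  fixes a b y :: real
  assumes "a > 0" and "b > 0" and "a \<noteq> b" and "y \<ge> 0"
  defines "E \<equiv> exp ((b - a) * y)" and "xs \<equiv> 2 * a / (b\<^sup>2 - a\<^sup>2)"
  shows "(\<integral>u. u * posterior_kernel a b y u \<partial>lborel) / integral\<^sup>L lborel (posterior_kernel a b y) =
    b / (b * E - a) * ((y - xs) * E + xs)"
proof -
  have "0 \<le> b * ((E - 1) * (b - a))"
    using exp_mult_minus_one_same_sign[OF \<open>y \<ge> 0\<close>, of "b - a"] \<open>b > 0\<close> by (simp add: E_def)
  moreover have "(b * E - a) * (b - a) = b * ((E - 1) * (b - a)) + (b - a)\<^sup>2"
    by (simp add: algebra_simps power2_eq_square)
  moreover have "(b - a)\<^sup>2 > 0" using \<open>a \<noteq> b\<close> by simp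
  ultimately have "(b * E - a) * (b - a) > 0" by linarith
  then have "b * E - a \<noteq> 0" by auto
  have "a + b \<noteq> 0" and "b - a \<noteq> 0" and "b\<^sup>2 - a\<^sup>2 = (a + b) * (b - a)"
    using assms by (auto simp: power2_eq_square algebra_simps)
  have denominator: "1 / (a + b) + (E - 1) / (b - a) + E / (a + b) = 2 * (b * E - a) / ((a + b) * (b - a))"
    using \<open>a + b \<noteq> 0\<close> \<open>b - a \<noteq> 0\<close> by (simp add: divide_simps) (simp add: algebra_simps)
  show ?thesis
    unfolding posterior_kernel_integral(2)[OF assms(1-4)] posterior_kernel_first_moment(2)[OF assms(1-4)]
      E_def[symmetric] denominator xs_def \<open>b\<^sup>2 - a\<^sup>2 = (a + b) * (b - a)\<close>
    using \<open>a + b \<noteq> 0\<close> \<open>b - a \<noteq> 0\<close> \<open>b * E - a \<noteq> 0\<close>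
    by (simp add: divide_simps power2_eq_square) (simp add: algebra_simps)
qed

lemma posterior_mean_affine_subst:
  fixes f l g :: "real \<Rightarrow> real" and s t K x :: real
  assumes "\<bar>s\<bar> = 1" and "K \<noteq> 0"
    and fl: "\<And>u. f (t + s * u) * l (x - (t + s * u)) = K * g u"
    and g: "integrable lborel g" and ug: "integrable lborel (\<lambda>u. u * g u)"
    and "integral\<^sup>L lborel g \<noteq> 0"
  shows "posterior_mean f l x = t + s * ((\<integral>u. u * g u \<partial>lborel) / integral\<^sup>L lborel g)"
proof -
  have change_of_variables: "integral\<^sup>L lborel h = (\<integral>u. h (t + s * u) \<partial>lborel)" for h :: "real \<Rightarrow> real"
    using lborel_integral_real_affine[of s h t] assms(1) by auto
  have "(\<integral>\<theta>. f \<theta> * l (x - \<theta>) \<partial>lborel) = K * integral\<^sup>L lborel g"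
    by (subst change_of_variables) (simp add: fl)
  moreover have "(\<integral>\<theta>. \<theta> * f \<theta> * l (x - \<theta>) \<partial>lborel) =
      t * K * integral\<^sup>L lborel g + s * K * (\<integral>u. u * g u \<partial>lborel)"
  proof -
    have "(\<integral>\<theta>. \<theta> * f \<theta> * l (x - \<theta>) \<partial>lborel) =
        (\<integral>u. (t + s * u) * (f (t + s * u) * l (x - (t + s * u))) \<partial>lborel)"
      by (subst change_of_variables) (simp only: mult.assoc)
    also have "\<dots> = (\<integral>u. t * K * g u + s * K * (u * g u) \<partial>lborel)"
      unfolding fl by (simp add: algebra_simps)
    also have "\<dots> = t * K * integral\<^sup>L lborel g + s * K * (\<integral>u. u * g u \<partial>lborel)"
      using g ug by simp
    finally show ?thesis .
  qed
  ultimately show ?thesis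
    unfolding posterior_mean_def using assms(2,6) by (simp add: field_simps)
qed

lemma laplace_density_product_eq_posterior_kernel:
  fixes \<sigma> \<tau> s t x y u :: real
  assumes "\<bar>s\<bar> = 1" and "x - t = s * y"
  shows "laplace_density t \<sigma> (t + s * u) * laplace_density 0 \<tau> (x - (t + s * u)) =
    1 / (4 * \<sigma> * \<tau>) * posterior_kernel (1 / \<sigma>) (1 / \<tau>) y u"
proof -
  have "x - (t + s * u) = s * (y - u)"
    using assms(2) by (simp add: algebra_simps)
  then have "\<bar>s * u\<bar> = \<bar>u\<bar>" and "\<bar>x - (t + s * u)\<bar> = \<bar>y - u\<bar>"
    using assms(1) by (simp_all add: abs_mult)
  then show ?thesis
    by (simp add: laplace_density_def posterior_kernel_def exp_diff exp_minus field_simps)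
qed

theorem mainTheorem11:
  fixes \<sigma>\<^sub>0 \<sigma>\<^sub>\<epsilon> \<theta>\<^sub>0 x :: real
  assumes "\<sigma>\<^sub>0 > 0" and "\<sigma>\<^sub>\<epsilon> > 0" and "\<sigma>\<^sub>0 \<noteq> \<sigma>\<^sub>\<epsilon>"
  shows "let x\<^sub>0 = x - \<theta>\<^sub>0; a\<^sub>0 = 1 / \<sigma>\<^sub>0; a\<^sub>\<epsilon> = 1 / \<sigma>\<^sub>\<epsilon>;
             xs = 2 * a\<^sub>0 / (a\<^sub>\<epsilon>\<^sup>2 - a\<^sub>0\<^sup>2)
         in posterior_mean (laplace_density \<theta>\<^sub>0 \<sigma>\<^sub>0) (laplace_density 0 \<sigma>\<^sub>\<epsilon>) x =
            \<theta>\<^sub>0 + sgn x\<^sub>0 * (a\<^sub>\<epsilon> / (a\<^sub>\<epsilon> * exp ((a\<^sub>\<epsilon> - a\<^sub>0) * \<bar>x\<^sub>0\<bar>) - a\<^sub>0))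
               * ((\<bar>x\<^sub>0\<bar> - xs) * exp ((a\<^sub>\<epsilon> - a\<^sub>0) * \<bar>x\<^sub>0\<bar>) + xs)"
proof -
  define a b y where "a = 1 / \<sigma>\<^sub>0" and "b = 1 / \<sigma>\<^sub>\<epsilon>" and "y = \<bar>x - \<theta>\<^sub>0\<bar>"
  define s :: real where "s = (if x - \<theta>\<^sub>0 < 0 then -1 else 1)"
  define m where "m = b / (b * exp ((b - a) * y) - a) *
    ((y - 2 * a / (b\<^sup>2 - a\<^sup>2)) * exp ((b - a) * y) + 2 * a / (b\<^sup>2 - a\<^sup>2))"
  have kernel: "a > 0" "b > 0" "a \<noteq> b" "y \<ge> 0"
    using assms by (auto simp: a_def b_def y_def)
  have s: "\<bar>s\<bar> = 1" "x - \<theta>\<^sub>0 = s * y"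
    by (auto simp: s_def y_def)
  have "posterior_mean (laplace_density \<theta>\<^sub>0 \<sigma>\<^sub>0) (laplace_density 0 \<sigma>\<^sub>\<epsilon>) x =
      \<theta>\<^sub>0 + s * ((\<integral>u. u * posterior_kernel a b y u \<partial>lborel) / integral\<^sup>L lborel (posterior_kernel a b y))"
    using assms posterior_kernel_integral_pos[OF kernel]
    by (intro posterior_mean_affine_subst[OF s(1) _
          laplace_density_product_eq_posterior_kernel[OF s, where \<sigma> = \<sigma>\<^sub>0 and \<tau> = \<sigma>\<^sub>\<epsilon>, folded a_def b_def]
          posterior_kernel_integral(1)[OF kernel] posterior_kernel_first_moment(1)[OF kernel]]) auto
  also have "\<dots> = \<theta>\<^sub>0 + s * m"
    unfolding posterior_kernel_mean[OF kernel] m_def ..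
  also have "\<dots> = \<theta>\<^sub>0 + sgn (x - \<theta>\<^sub>0) * m"
    \<comment> \<open>\<open>s = 1 \<noteq> sgn 0\<close> at \<open>x = \<theta>\<^sub>0\<close>, but then \<open>y = 0\<close> and \<open>m = 0\<close>\<close>
    by (cases "x = \<theta>\<^sub>0") (auto simp: s_def y_def m_def sgn_if)
  finally show ?thesis
    by (simp add: Let_def m_def a_def b_def y_def mult.assoc)
qed

end
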